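(* Let $\mathfrak g$ be a nilpotent real Lie algebra with an abelian complex structure $L$, and let $0=\mathfrak z^0\subset\mathfrak z^1\subset\dots\subset\mathfrak z^k=\mathfrak g$ be its upper central series. Then every $\mathfrak z^i$ is $L$-invariant. If $\mathfrak g$ carries an abelian hypercomplex structure $(I,J,K)$, then every $\mathfrak z^i$ is $\mathbb H$-invariant.
   Context: The upper central series is defined by $\mathfrak z^0=0$, $\mathfrak z^i=\{x\in\mathfrak g:[x,\mathfrak g]\subset\mathfrak z^{i-1}\}$. A complex structure on $\mathfrak g$ is a linear $L$ with $L^2=-1$ such that $\mathfrak g^{1,0}=\{x\in\mathfrak g\otimes\mathbb C:Lx=\sqrt{-1}x\}$ is a subalgebra of $\mathfrak g\otimes\mathbb C$; it is abelian if $\mathfrak g^{1,0}$ is abelian, equivalently $[Lx,y]=-[x,Ly]$ for all $x,y$. A hypercomplex structure is a triple $(I,J,K)$ of complex structures with $I^2=J^2=K^2=-1$, $IJ=-JI=K$; it is abelian if $I,J,K$ are abelian. *)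

theory Defs
  imports "HOL-Analysis.Analysis"
begin

definition lie_algebra :: "('a::real_vector \<Rightarrow> 'a \<Rightarrow> 'a) \<Rightarrow> bool" where
  "lie_algebra br \<longleftrightarrow>
     (\<forall>x. linear (br x)) \<and> (\<forall>y. linear (\<lambda>x. br x y)) \<and>
     (\<forall>x. br x x = 0) \<and>
     (\<forall>x y z. br x (br y z) + br y (br z x) + br z (br x y) = 0)"

fun lower_central :: "('a::real_vector \<Rightarrow> 'a \<Rightarrow> 'a) \<Rightarrow> nat \<Rightarrow> 'a set" where
  "lower_central br 0 = UNIV"
| "lower_central br (Suc i) = span {br x y | x y. y \<in> lower_central br i}"

definition nilpotent_lie :: "('a::real_vector \<Rightarrow> 'a \<Rightarrow> 'a) \<Rightarrow> bool" where
  "nilpotent_lie br \<longleftrightarrow> (\<exists>k. lower_central br k = {0})"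

fun upper_central :: "('a::real_vector \<Rightarrow> 'a \<Rightarrow> 'a) \<Rightarrow> nat \<Rightarrow> 'a set" where
  "upper_central br 0 = {0}"
| "upper_central br (Suc i) = {x. \<forall>y. br x y \<in> upper_central br i}"

text \<open>Complexification g \<otimes> C modelled as pairs (a,b) standing for a + sqrt(-1) b,
  with the complex-bilinear extension of the bracket and the complex-linear
  extension of an endomorphism L.\<close>
definition cbr :: "('a::real_vector \<Rightarrow> 'a \<Rightarrow> 'a) \<Rightarrow> 'a \<times> 'a \<Rightarrow> 'a \<times> 'a \<Rightarrow> 'a \<times> 'a" where
  "cbr br p q = (br (fst p) (fst q) - br (snd p) (snd q), br (fst p) (snd q) + br (snd p) (fst q))"

text \<open>g^{1,0} = {z \<in> g \<otimes> C. L z = sqrt(-1) z}; sqrt(-1)(a,b) = (-b,a).\<close>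
definition holo_part :: "('a::real_vector \<Rightarrow> 'a) \<Rightarrow> ('a \<times> 'a) set" where
  "holo_part L = {p. (L (fst p), L (snd p)) = (- snd p, fst p)}"

definition complex_structure :: "('a::real_vector \<Rightarrow> 'a \<Rightarrow> 'a) \<Rightarrow> ('a \<Rightarrow> 'a) \<Rightarrow> bool" where
  "complex_structure br L \<longleftrightarrow>
     linear L \<and> (\<forall>x. L (L x) = - x) \<and>
     (\<forall>p\<in>holo_part L. \<forall>q\<in>holo_part L. cbr br p q \<in> holo_part L)"

definition abelian_complex_structure :: "('a::real_vector \<Rightarrow> 'a \<Rightarrow> 'a) \<Rightarrow> ('a \<Rightarrow> 'a) \<Rightarrow> bool" where
  "abelian_complex_structure br L \<longleftrightarrow>
     complex_structure br L \<and>
     (\<forall>p\<in>holo_part L. \<forall>q\<in>holo_part L. cbr br p q = 0)"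

definition abelian_hypercomplex_structure ::
  "('a::real_vector \<Rightarrow> 'a \<Rightarrow> 'a) \<Rightarrow> ('a \<Rightarrow> 'a) \<Rightarrow> ('a \<Rightarrow> 'a) \<Rightarrow> ('a \<Rightarrow> 'a) \<Rightarrow> bool" where
  "abelian_hypercomplex_structure br I J K \<longleftrightarrow>
     abelian_complex_structure br I \<and> abelian_complex_structure br J \<and>
     abelian_complex_structure br K \<and>
     (\<forall>x. I (J x) = K x) \<and> (\<forall>x. J (I x) = - K x)"

end

theory Submission
  imports Defs
begin

text \<open>Abelianness of \<open>\<gg>\<^bsup>1,0\<^esup>\<close> says \<open>[L x, y] = - [x, L y]\<close>: test it on the
  holomorphic vectors \<open>x - \<i> L x\<close> and \<open>y - \<i> L y\<close>. Hence if \<open>[x, \<gg>] \<subseteq> \<zz>\<^sup>i\<close> then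
  \<open>[L x, y] = - [x, L y] \<in> \<zz>\<^sup>i\<close> for all \<open>y\<close>, so \<open>L\<close> preserves \<open>\<zz>\<^bsup>i+1\<^esup>\<close> by induction on \<open>i\<close>.\<close>

lemma subspace_upper_central:
  assumes "\<And>y. linear (\<lambda>x. br x y)"
  shows "subspace (upper_central br i)"
proof (induction i)
  case 0
  show ?case by (simp add: subspace_single_0)
next
  case (Suc i)
  show ?case
    unfolding upper_central.simps subspace_def
    using Suc linear_0[OF assms] linear_add[OF assms] linear_scale[OF assms]
    by (simp add: subspace_add subspace_scale subspace_0)
qed

lemma abelian_complex_structure_skew:
  assumes "abelian_complex_structure br L"
    and "\<And>x. linear (br x)" and "\<And>y. linear (\<lambda>x. br x y)"
  shows "br (L x) y = - br x (L y)"
proof -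
  have L_sq: "\<And>x. L (L x) = - x" and "linear L"
    using assms(1) unfolding abelian_complex_structure_def complex_structure_def by auto
  have holo: "(z, - L z) \<in> holo_part L" for z
    using L_sq linear_neg[OF \<open>linear L\<close>] unfolding holo_part_def by simp
  have "cbr br (x, - L x) (y, - L y) = 0"
    using assms(1) holo unfolding abelian_complex_structure_def by blast
  then have "br x (- L y) + br (- L x) y = 0"
    unfolding cbr_def by (simp add: zero_prod_def)
  then show ?thesis
    using linear_neg[OF assms(2)] linear_neg[OF assms(3)] by (simp add: algebra_simps)
qed

lemma upper_central_invariant:
  assumes "linear L" and skew: "\<And>x y. br (L x) y = - br x (L y)"
    and "\<And>y. linear (\<lambda>x. br x y)"
  shows "L ` upper_central br i \<subseteq> upper_central br i"
proof (induction i)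
  case 0
  show ?case using linear_0[OF \<open>linear L\<close>] by simp
next
  case (Suc i)
  have "br (L x) y \<in> upper_central br i" if "x \<in> upper_central br (Suc i)" for x y
    using that skew subspace_neg[OF subspace_upper_central[OF assms(3)]] by simp
  then show ?case by auto
qed

lemma abelian_complex_structure_upper_central_invariant:
  assumes "abelian_complex_structure br L" and "lie_algebra br"
  shows "L ` upper_central br i \<subseteq> upper_central br i"
proof -
  have "linear L"
    using assms(1) unfolding abelian_complex_structure_def complex_structure_def by simp
  moreover have "\<And>x. linear (br x)" and "\<And>y. linear (\<lambda>x. br x y)"
    using assms(2) unfolding lie_algebra_def by auto
  ultimately show ?thesis
    using upper_central_invariant abelian_complex_structure_skew[OF assms(1)] by metis
qed

theorem lemma4p1:
  fixes br :: "'a::real_vector \<Rightarrow> 'a \<Rightarrow> 'a"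
  assumes "lie_algebra br" and "nilpotent_lie br"
  shows "(\<forall>L. abelian_complex_structure br L \<longrightarrow>
            (\<forall>i. L ` upper_central br i \<subseteq> upper_central br i))
       \<and> (\<forall>I J K. abelian_hypercomplex_structure br I J K \<longrightarrow>
            (\<forall>i. I ` upper_central br i \<subseteq> upper_central br i \<and>
                 J ` upper_central br i \<subseteq> upper_central br i \<and>
                 K ` upper_central br i \<subseteq> upper_central br i))"
  using abelian_complex_structure_upper_central_invariant[OF _ assms(1)]
  unfolding abelian_hypercomplex_structure_def by blast

end
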